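(* Identify each ququart basis state $|1\rangle,|2\rangle,|3\rangle,|4\rangle$ of $\mathbb{C}^4$ with the two-qubit states $|00\rangle,|01\rangle,|10\rangle,|11\rangle$ respectively. Let $$L=\begin{pmatrix}1&2&3&4\\2&1&4&3\\3&4&1&2\\4&3&2&1\end{pmatrix},\quad M=\begin{pmatrix}1&2&3&4\\3&4&1&2\\4&3&2&1\\2&1&4&3\end{pmatrix},$$ $P_{16}=\sum_{l,j=1}^4|L_{lj},M_{lj}\rangle\langle l,j|$ acting on $\mathbb{C}^4\otimes\mathbb{C}^4$, and $\Phi_A(\rho)=\mathrm{Tr}_2[P_{16}\rho P_{16}^\dagger]$ (partial trace over the second ququart). Write the first ququart as qubits $(q_1,q_2)$ and the second as $(q_3,q_4)$, let $|\Psi_\pm\rangle=(|00\rangle\pm|11\rangle)/\sqrt2$, $|\Xi_\pm\rangle=(|01\rangle\pm|10\rangle)/\sqrt2$, and write $|X\rangle\otimes|Y\rangle$ for the state with $|X\rangle$ on the first qubits $(q_1,q_3)$ of the two ququarts and $|Y\rangle$ on the second qubits $(q_2,q_4)$. Consider the orthonormal basis arranged in the $4\times4$ array Row 1: $|\Psi_+\rangle|\Psi_+\rangle,\ |\Psi_+\rangle|\Psi_-\rangle,\ |\Psi_-\rangle|\Psi_+\rangle,\ |\Psi_-\rangle|\Psi_-\rangle$; Row 2: $|\Psi_+\rangle|\Xi_+\rangle,\ |\Psi_+\rangle|\Xi_-\rangle,\ -|\Psi_-\rangle|\Xi_+\rangle,\ -|\Psi_-\rangle|\Xi_-\rangle$;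 Row 3: $|\Xi_+\rangle|\Psi_+\rangle,\ -|\Xi_+\rangle|\Psi_-\rangle,\ -|\Xi_-\rangle|\Psi_+\rangle,\ |\Xi_-\rangle|\Psi_-\rangle$; Row 4: $|\Xi_+\rangle|\Xi_+\rangle,\ -|\Xi_+\rangle|\Xi_-\rangle,\ |\Xi_-\rangle|\Xi_+\rangle,\ -|\Xi_-\rangle|\Xi_-\rangle$. Fix $m$ rows and $n$ columns of this array, and consider the two-ququart pure states $|\psi\rangle$ whose expansion in this basis uses only basis vectors lying in the chosen $m$ rows and $n$ columns. Then the maximal number of nonzero eigenvalues of $\Phi_A(|\psi\rangle\langle\psi|)$ over such states equals $\min(m,n)$. *)

theory Defs
  imports Complex_Main "Jordan_Normal_Form.Char_Poly"
begin

text \<open>Indices are 0-based: ququart basis state |k+1> is index k, k in {0..3};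
  ququart index a corresponds to the qubit pair (a div 2, a mod 2).
  A two-ququart vector is a function psi a b (amplitude of |a>|b>).\<close>

definition Lsq :: "nat \<Rightarrow> nat \<Rightarrow> nat" where
  "Lsq l j = [[0,1,2,3],[1,0,3,2],[2,3,0,1],[3,2,1,0]] ! l ! j"

definition Msq :: "nat \<Rightarrow> nat \<Rightarrow> nat" where
  "Msq l j = [[0,1,2,3],[2,3,0,1],[3,2,1,0],[1,0,3,2]] ! l ! j"

definition P16 :: "(nat \<Rightarrow> nat \<Rightarrow> complex) \<Rightarrow> nat \<Rightarrow> nat \<Rightarrow> complex" where
  "P16 psi a b = (\<Sum>l<4. \<Sum>j<4. if Lsq l j = a \<and> Msq l j = b then psi l j else 0)"

definition PhiA :: "(nat \<Rightarrow> nat \<Rightarrow> complex) \<Rightarrow> complex mat" where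
  "PhiA psi = mat 4 4 (\<lambda>(a, a'). \<Sum>b<4. P16 psi a b * cnj (P16 psi a' b))"

definition num_nonzero_eigs :: "complex mat \<Rightarrow> nat" where
  "num_nonzero_eigs A = (\<Sum>e\<in>{e. eigenvalue A e \<and> e \<noteq> 0}. order e (char_poly A))"

definition PsiP :: "nat \<Rightarrow> nat \<Rightarrow> complex" where
  "PsiP x y = (if (x, y) = (0, 0) \<or> (x, y) = (1, 1) then 1 / sqrt 2 else 0)"
definition PsiM :: "nat \<Rightarrow> nat \<Rightarrow> complex" where
  "PsiM x y = (if (x, y) = (0, 0) then 1 / sqrt 2 else if (x, y) = (1, 1) then - 1 / sqrt 2 else 0)"
definition XiP :: "nat \<Rightarrow> nat \<Rightarrow> complex" where
  "XiP x y = (if (x, y) = (0, 1) \<or> (x, y) = (1, 0) then 1 / sqrt 2 else 0)"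
definition XiM :: "nat \<Rightarrow> nat \<Rightarrow> complex" where
  "XiM x y = (if (x, y) = (0, 1) then 1 / sqrt 2 else if (x, y) = (1, 0) then - 1 / sqrt 2 else 0)"

text \<open>|X>|Y>: X on qubits (q1,q3), Y on qubits (q2,q4), where the first ququart
  is (q1,q2) and the second is (q3,q4).\<close>
definition tens :: "(nat \<Rightarrow> nat \<Rightarrow> complex) \<Rightarrow> (nat \<Rightarrow> nat \<Rightarrow> complex) \<Rightarrow> nat \<Rightarrow> nat \<Rightarrow> complex" where
  "tens X Y a b = X (a div 2) (b div 2) * Y (a mod 2) (b mod 2)"

definition arrX :: "nat \<Rightarrow> nat \<Rightarrow> nat \<Rightarrow> nat \<Rightarrow> complex" where
  "arrX r c = [[PsiP,PsiP,PsiM,PsiM],[PsiP,PsiP,PsiM,PsiM],[XiP,XiP,XiM,XiM],[XiP,XiP,XiM,XiM]] ! r ! c"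
definition arrY :: "nat \<Rightarrow> nat \<Rightarrow> nat \<Rightarrow> nat \<Rightarrow> complex" where
  "arrY r c = [[PsiP,PsiM,PsiP,PsiM],[XiP,XiM,XiP,XiM],[PsiP,PsiM,PsiP,PsiM],[XiP,XiM,XiP,XiM]] ! r ! c"
definition arrSign :: "nat \<Rightarrow> nat \<Rightarrow> complex" where
  "arrSign r c = [[1,1,1,1],[1,1,-1,-1],[1,-1,-1,1],[1,-1,1,-1]] ! r ! c"

definition basisB :: "nat \<Rightarrow> nat \<Rightarrow> nat \<Rightarrow> nat \<Rightarrow> complex" where
  "basisB r c a b = arrSign r c * tens (arrX r c) (arrY r c) a b"

end

theory Submission
  imports Defs
begin

(* Since L and M are orthogonal Latin squares, P16 only permutes amplitudes, and it maps the
   basis vector in row r and column c of the array to |r> (x) h_c, where h_c is row c of the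
   normalised 4x4 Hadamard matrix. Hence a state with coefficients B = (alpha r c) supported on
   the chosen rows R and columns C is sent to sum_{r,c} alpha r c |r> (x) h_c, and orthonormality
   of the h_c gives PhiA = B B^dagger. The matrix B B^dagger has zero columns outside R, and
   B^dagger B, which has the same characteristic polynomial, has zero columns outside C; so at
   most min |R| |C| eigenvalues are nonzero. Putting k^(-1/2) on the graph of a bijection
   between k = min |R| |C| chosen rows and columns makes B B^dagger equal to 1/k on k diagonal
   entries, so the bound is attained. *)

section \<open>Counting nonzero eigenvalues via the characteristic polynomial\<close>

(* Sylvester's identity, from the block factorisations
   [zI X; Y I] [I 0; -Y I] = [zI-XY X; 0 I] and [I 0; -Y zI] [zI X; Y I] = [zI X; 0 zI-YX]. *)
lemma det_scalar_minus_mult_commute: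
  fixes X Y :: "'a::idom mat"
  assumes X: "X \<in> carrier_mat n n" and Y: "Y \<in> carrier_mat n n" and z: "z \<noteq> 0"
  shows "det (z \<cdot>\<^sub>m 1\<^sub>m n - X * Y) = det (z \<cdot>\<^sub>m 1\<^sub>m n - Y * X)"
proof -
  let ?I = "1\<^sub>m n :: 'a mat"
  let ?Z = "0\<^sub>m n n :: 'a mat"
  let ?zI = "z \<cdot>\<^sub>m 1\<^sub>m n :: 'a mat"
  define M where "M = four_block_mat ?zI X Y ?I"
  define E1 where "E1 = four_block_mat ?I ?Z (- Y) ?I"
  define E2 where "E2 = four_block_mat ?I ?Z (- Y) ?zI"
  have M: "M \<in> carrier_mat (n + n) (n + n)" unfolding M_def using X Y by auto
  have E1: "E1 \<in> carrier_mat (n + n) (n + n)" unfolding E1_def using Y by auto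
  have E2: "E2 \<in> carrier_mat (n + n) (n + n)" unfolding E2_def using Y by auto
  have "M * E1 = four_block_mat (?zI * ?I + X * (- Y)) (?zI * ?Z + X * ?I)
      (Y * ?I + ?I * (- Y)) (Y * ?Z + ?I * ?I)"
    unfolding M_def E1_def by (rule mult_four_block_mat) (use X Y in auto)
  also have "\<dots> = four_block_mat (?zI - X * Y) X ?Z ?I"
    using X Y by (intro arg_cong4[where f = four_block_mat] eq_matI) auto
  finally have ME1: "M * E1 = four_block_mat (?zI - X * Y) X ?Z ?I" .
  have "E2 * M = four_block_mat (?I * ?zI + ?Z * Y) (?I * X + ?Z * ?I)
      (- Y * ?zI + ?zI * Y) (- Y * X + ?zI * ?I)"
    unfolding M_def E2_def by (rule mult_four_block_mat) (use X Y in auto)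
  also have "\<dots> = four_block_mat ?zI X ?Z (?zI - Y * X)"
    using X Y by (intro arg_cong4[where f = four_block_mat] eq_matI) auto
  finally have E2M: "E2 * M = four_block_mat ?zI X ?Z (?zI - Y * X)" .
  have "det E1 = 1" unfolding E1_def
    by (subst det_four_block_mat_upper_right_zero[of _ n _ n]) (use Y in auto)
  moreover have "det (four_block_mat (?zI - X * Y) X ?Z ?I) = det (?zI - X * Y)"
    by (subst det_four_block_mat_lower_left_zero[of _ n _ n]) (use X Y in auto)
  ultimately have detM: "det M = det (?zI - X * Y)"
    using ME1 det_mult[OF M E1] by simp
  have "det E2 = z ^ n" unfolding E2_def
    by (subst det_four_block_mat_upper_right_zero[of _ n _ n]) (use Y in auto)
  moreover have "det (four_block_mat ?zI X ?Z (?zI - Y * X)) = z ^ n * det (?zI - Y * X)"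
    by (subst det_four_block_mat_lower_left_zero[of _ n _ n]) (use X Y in auto)
  ultimately have "det M = det (?zI - Y * X)"
    using E2M det_mult[OF E2 M] z by auto
  with detM show ?thesis by simp
qed

lemma char_poly_mult_commute:
  fixes X Y :: "'a::field mat"
  assumes X: "X \<in> carrier_mat n n" and Y: "Y \<in> carrier_mat n n"
  shows "char_poly (X * Y) = char_poly (Y * X)"
proof -
  let ?C = "map_mat (\<lambda>a. [:a:])"
  have char_poly_matrix_mult: "char_poly_matrix (A * B) = [:0, 1:] \<cdot>\<^sub>m 1\<^sub>m n - ?C A * ?C B"
    if A: "A \<in> carrier_mat n n" and B: "B \<in> carrier_mat n n" for A B :: "'a mat"
  proof -
    have "char_poly_matrix (A * B) = [:0, 1:] \<cdot>\<^sub>m 1\<^sub>m n - ?C (A * B)"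
      unfolding char_poly_matrix_def using A B by (intro eq_matI) auto
    also have "?C (A * B) = ?C A * ?C B" by (rule map_poly_mult(1)[OF A B])
    finally show ?thesis .
  qed
  have "char_poly (X * Y) = det ([:0, 1:] \<cdot>\<^sub>m 1\<^sub>m n - ?C X * ?C Y)"
    unfolding char_poly_def char_poly_matrix_mult[OF X Y] ..
  also have "\<dots> = det ([:0, 1:] \<cdot>\<^sub>m 1\<^sub>m n - ?C Y * ?C X)"
    by (rule det_scalar_minus_mult_commute) (use X Y in auto)
  also have "\<dots> = char_poly (Y * X)"
    unfolding char_poly_def char_poly_matrix_mult[OF Y X] ..
  finally show ?thesis .
qed

lemma char_poly_dvd_if_zero_columns:
  fixes A :: "'a::field mat"
  assumes A: "A \<in> carrier_mat n n" and S: "S \<subseteq> {0..<n}"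
    and zero: "\<And>i j. i < n \<Longrightarrow> j < n \<Longrightarrow> j \<notin> S \<Longrightarrow> A $$ (i, j) = 0"
  shows "[:0, 1:] ^ (n - card S) dvd char_poly A"
proof -
  let ?M = "char_poly_matrix A"
  have M: "?M \<in> carrier_mat n n" using A by simp
  have x_dvd: "[:0, 1:] dvd ?M $$ (i, j)" if "i < n" "j < n" "j \<notin> S" for i j
    using A that zero unfolding char_poly_matrix_def by (auto simp: one_pCons)
  show ?thesis unfolding char_poly_def det_def'[OF M]
  proof (rule dvd_sum)
    fix p assume "p \<in> {p. p permutes {0..<n}}"
    then have p: "p permutes {0..<n}" by simp
    have p_less: "p i < n" if "i < n" for i using permutes_in_image[OF p] that by simp
    \<comment> \<open>the rows sent by \<open>p\<close> outside \<open>S\<close> each contribute a factor \<open>x\<close>\<close>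
    define I where "I = {i \<in> {0..<n}. p i \<notin> S}"
    have "inj_on p I" using permutes_inj[OF p] inj_on_subset by blast
    then have "card I = card (p ` I)" by (simp add: card_image)
    also have "p ` I = {j \<in> p ` {0..<n}. j \<notin> S}" unfolding I_def by blast
    also have "\<dots> = {0..<n} - S" unfolding permutes_image[OF p] by blast
    also have "card \<dots> = n - card S" using S by (simp add: card_Diff_subset finite_subset)
    finally have card_I: "card I = n - card S" .
    have "[:0, 1:] ^ card I = (\<Prod>i\<in>I. [:0, 1:])" by simp
    also have "\<dots> dvd (\<Prod>i\<in>I. ?M $$ (i, p i))"
      by (rule prod_dvd_prod, rule x_dvd) (auto simp: I_def p_less)
    also have "\<dots> dvd (\<Prod>i = 0..<n. ?M $$ (i, p i))"
      by (rule prod_dvd_prod_subset) (auto simp: I_def)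
    finally show "[:0, 1:] ^ (n - card S) dvd signof p * (\<Prod>i = 0..<n. ?M $$ (i, p i))"
      unfolding card_I by simp
  qed
qed

lemma order_prod_list_linear:
  "order x (\<Prod>a\<leftarrow>as. [:- a, 1:]) = count_list as (x :: 'a::idom)"
proof (induction as)
  case (Cons a as)
  let ?P = "\<Prod>a\<leftarrow>as. [:- a, 1:]"
  have "?P \<noteq> 0" by auto
  then have "order x (\<Prod>b\<leftarrow>a # as. [:- b, 1:]) = order x [:- a, 1:] + order x ?P"
    unfolding list.map prod_list.Cons by (intro order_mult no_zero_divisors) simp_all
  moreover have "order x [:- a, 1:] = (if a = x then 1 else 0)"
    using order_linear_power[of x "- a" 1] by auto
  ultimately show ?case using Cons.IH by simp
qed simp

lemma num_nonzero_eigs_factorized: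
  assumes A: "A \<in> carrier_mat n n" and cp: "char_poly A = (\<Prod>a\<leftarrow>as. [:- a, 1:])"
  shows "num_nonzero_eigs A = length (filter (\<lambda>a. a \<noteq> 0) as)"
proof -
  let ?as' = "filter (\<lambda>a. a \<noteq> 0) as"
  have "{e. eigenvalue A e \<and> e \<noteq> 0} = set ?as'"
    unfolding eigenvalue_root_char_poly[OF A] cp poly_prod_list prod_list_zero_iff by auto
  moreover have "order e (char_poly A) = count_list ?as' e" if "e \<noteq> 0" for e
    unfolding cp order_prod_list_linear count_list_eq_length_filter filter_filter
    using that by (metis (mono_tags, lifting))
  ultimately show ?thesis
    unfolding num_nonzero_eigs_def by (simp add: sum_count_set)
qed

lemma num_nonzero_eigs_le_if_zero_columns:
  fixes A :: "complex mat"
  assumes A: "A \<in> carrier_mat n n" and S: "S \<subseteq> {0..<n}"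
    and zero: "\<And>i j. i < n \<Longrightarrow> j < n \<Longrightarrow> j \<notin> S \<Longrightarrow> A $$ (i, j) = 0"
  shows "num_nonzero_eigs A \<le> card S"
proof -
  obtain as where cp: "char_poly A = (\<Prod>a\<leftarrow>as. [:- a, 1:])" and len: "length as = n"
    using char_poly_factorized[OF A] by blast
  have "char_poly A \<noteq> 0" unfolding cp by (auto simp: prod_list_zero_iff)
  moreover have "[:- 0, 1:] ^ (n - card S) dvd char_poly A"
    using char_poly_dvd_if_zero_columns[OF A S zero] by simp
  ultimately have "n - card S \<le> order 0 (char_poly A)"
    by (rule order_max[rotated])
  also have "\<dots> = length (filter (\<lambda>a. \<not> a \<noteq> 0) as)"
    unfolding cp order_prod_list_linear count_list_eq_length_filter by (metis (mono_tags) eq_commute)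
  finally have "n - card S \<le> length (filter (\<lambda>a. \<not> a \<noteq> 0) as)" .
  moreover have "card S \<le> n" using card_mono[OF _ S] by simp
  ultimately show ?thesis
    using num_nonzero_eigs_factorized[OF A cp] sum_length_filter_compl[of "\<lambda>a. a \<noteq> 0" as] len
    by linarith
qed

lemma num_nonzero_eigs_mult_le:
  fixes X Y :: "complex mat"
  assumes X: "X \<in> carrier_mat n n" and Y: "Y \<in> carrier_mat n n"
    and S: "S \<subseteq> {0..<n}" and T: "T \<subseteq> {0..<n}"
    and X_zero: "\<And>i j. i < n \<Longrightarrow> j < n \<Longrightarrow> j \<notin> S \<Longrightarrow> X $$ (i, j) = 0"
    and Y_zero: "\<And>i j. i < n \<Longrightarrow> j < n \<Longrightarrow> j \<notin> T \<Longrightarrow> Y $$ (i, j) = 0"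
  shows "num_nonzero_eigs (X * Y) \<le> min (card S) (card T)"
proof -
  have "num_nonzero_eigs (X * Y) = num_nonzero_eigs (Y * X)"
    unfolding num_nonzero_eigs_def
    eigenvalue_root_char_poly[OF mult_carrier_mat[OF X Y]]
    eigenvalue_root_char_poly[OF mult_carrier_mat[OF Y X]] char_poly_mult_commute[OF X Y] ..
  moreover have "num_nonzero_eigs (Y * X) \<le> card S"
    using X Y X_zero by (intro num_nonzero_eigs_le_if_zero_columns[OF _ S]) (auto simp: scalar_prod_def)
  moreover have "num_nonzero_eigs (X * Y) \<le> card T"
    using X Y Y_zero by (intro num_nonzero_eigs_le_if_zero_columns[OF _ T]) (auto simp: scalar_prod_def)
  ultimately show ?thesis by simp
qed

lemma num_nonzero_eigs_diagonal:
  fixes A :: "complex mat"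
  assumes A: "A \<in> carrier_mat n n" and diag: "diagonal_mat A"
  shows "num_nonzero_eigs A = card {i. i < n \<and> A $$ (i, i) \<noteq> 0}"
proof -
  have "upper_triangular A"
    using A diag unfolding diagonal_mat_def upper_triangular_def by auto
  then have "num_nonzero_eigs A = length (filter (\<lambda>a. a \<noteq> 0) (diag_mat A))"
    by (intro num_nonzero_eigs_factorized[OF A] char_poly_upper_triangular[OF A])
  also have "\<dots> = card {i. i < n \<and> A $$ (i, i) \<noteq> 0}"
    using A unfolding length_filter_conv_card
    by (auto simp: diag_mat_def intro!: arg_cong[where f = card])
  finally show ?thesis .
qed

section \<open>The channel on states spanned by part of the array\<close>

lemma less_4_cases:
  assumes "(x::nat) < 4"
  obtains "x = 0" | "x = 1" | "x = 2" | "x = 3"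
  using assms by linarith

definition hadamard :: "nat \<Rightarrow> nat \<Rightarrow> complex" where
  "hadamard c b = [[1, 1, 1, 1], [1, 1, -1, -1], [1, -1, -1, 1], [1, -1, 1, -1]] ! c ! b / 2"

lemma hadamard_orthonormal:
  assumes "c < 4" "c' < 4"
  shows "(\<Sum>b<4. hadamard c b * cnj (hadamard c' b)) = (if c = c' then 1 else 0)"
  by (cases rule: less_4_cases[OF assms(1)]; cases rule: less_4_cases[OF assms(2)])
     (simp_all add: hadamard_def eval_nat_numeral)

lemma basisB_eq_hadamard:
  assumes "r < 4" "c < 4" "l < 4" "j < 4"
  shows "basisB r c l j = (if Lsq l j = r then hadamard c (Msq l j) else 0)"
proof -
  have sqrt2: "complex_of_real (sqrt 2) * complex_of_real (sqrt 2) = 2"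
    "(1 / complex_of_real (sqrt 2)) * (1 / complex_of_real (sqrt 2)) = 1 / 2"
    "(- 1 / complex_of_real (sqrt 2)) * (1 / complex_of_real (sqrt 2)) = - 1 / 2"
    "(1 / complex_of_real (sqrt 2)) * (- 1 / complex_of_real (sqrt 2)) = - 1 / 2"
    "(- 1 / complex_of_real (sqrt 2)) * (- 1 / complex_of_real (sqrt 2)) = 1 / 2"
    by (simp_all flip: of_real_mult)
  show ?thesis
    by (cases rule: less_4_cases[OF assms(1)]; cases rule: less_4_cases[OF assms(2)];
        cases rule: less_4_cases[OF assms(3)]; cases rule: less_4_cases[OF assms(4)])
       (simp_all add: basisB_def tens_def arrX_def arrY_def arrSign_def PsiP_def PsiM_def
         XiP_def XiM_def Lsq_def Msq_def hadamard_def sqrt2)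
qed

lemma P16_Lsq_Msq:
  assumes "l < 4" "j < 4"
  shows "P16 psi (Lsq l j) (Msq l j) = psi l j"
  by (cases rule: less_4_cases[OF assms(1)]; cases rule: less_4_cases[OF assms(2)])
     (simp_all add: P16_def Lsq_def Msq_def eval_nat_numeral)

lemma Lsq_Msq_surj:
  assumes "a < 4" "b < 4"
  obtains l j where "l < 4" "j < 4" "Lsq l j = a" "Msq l j = b"
proof -
  have "\<exists>l<4. \<exists>j<4. Lsq l j = a \<and> Msq l j = b"
    by (cases rule: less_4_cases[OF assms(1)]; cases rule: less_4_cases[OF assms(2)])
       (simp_all add: Lsq_def Msq_def less_Suc_eq numeral_eq_Suc conj_disj_distribR ex_disj_distrib)
  then show ?thesis using that by blast
qed

lemma sum_Lsq_Msq:
  "(\<Sum>l<4. \<Sum>j<4. g (Lsq l j) (Msq l j)) = (\<Sum>a<4. \<Sum>b<4. (g a b :: 'a::comm_monoid_add))"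
  by (simp add: eval_nat_numeral Lsq_def Msq_def ac_simps)

lemma sum_mult_cnj_orthonormal_expansion:
  fixes u :: "nat \<Rightarrow> 'a \<Rightarrow> complex"
  assumes orth: "\<And>c c'. c < m \<Longrightarrow> c' < m \<Longrightarrow>
      (\<Sum>b\<in>B. u c b * cnj (u c' b)) = (if c = c' then 1 else 0)"
  shows "(\<Sum>b\<in>B. (\<Sum>c<m. x c * u c b) * cnj (\<Sum>c<m. y c * u c b)) = (\<Sum>c<m. x c * cnj (y c))"
proof -
  have "(\<Sum>b\<in>B. (\<Sum>c<m. x c * u c b) * cnj (\<Sum>c<m. y c * u c b))
      = (\<Sum>b\<in>B. \<Sum>c<m. \<Sum>c'<m. x c * cnj (y c') * (u c b * cnj (u c' b)))"
    by (simp add: cnj_sum sum_product mult_ac)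
  also have "\<dots> = (\<Sum>c<m. \<Sum>c'<m. \<Sum>b\<in>B. x c * cnj (y c') * (u c b * cnj (u c' b)))"
    by (subst sum.swap, rule sum.cong[OF refl], rule sum.swap)
  also have "\<dots> = (\<Sum>c<m. \<Sum>c'<m. x c * cnj (y c') * (\<Sum>b\<in>B. u c b * cnj (u c' b)))"
    by (simp add: sum_distrib_left)
  also have "\<dots> = (\<Sum>c<m. \<Sum>c'<m. if c = c' then x c * cnj (y c') else 0)"
    by (intro sum.cong refl) (simp add: orth)
  also have "\<dots> = (\<Sum>c<m. x c * cnj (y c))" by simp
  finally show ?thesis .
qed

definition coeff_mat :: "nat set \<Rightarrow> nat set \<Rightarrow> (nat \<Rightarrow> nat \<Rightarrow> complex) \<Rightarrow> complex mat" where
  "coeff_mat R C \<alpha> = mat 4 4 (\<lambda>(r, c). if r \<in> R \<and> c \<in> C then \<alpha> r c else 0)"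

definition adjoint_mat :: "complex mat \<Rightarrow> complex mat" where
  "adjoint_mat A = mat (dim_col A) (dim_row A) (\<lambda>(i, j). cnj (A $$ (j, i)))"

lemma P16_span:
  assumes R: "R \<subseteq> {0..<4}" and C: "C \<subseteq> {0..<4}" and a: "a < 4" and b: "b < 4"
  shows "P16 (\<lambda>l j. \<Sum>r\<in>R. \<Sum>c\<in>C. \<alpha> r c * basisB r c l j) a b
    = (\<Sum>c<4. coeff_mat R C \<alpha> $$ (a, c) * hadamard c b)"
proof -
  obtain l j where lj: "l < 4" "j < 4" "Lsq l j = a" "Msq l j = b"
    using Lsq_Msq_surj[OF a b] .
  have fin: "finite R" "finite C" using R C finite_subset by blast+
  have "P16 (\<lambda>l j. \<Sum>r\<in>R. \<Sum>c\<in>C. \<alpha> r c * basisB r c l j) a b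
      = (\<Sum>r\<in>R. \<Sum>c\<in>C. \<alpha> r c * basisB r c l j)"
    using P16_Lsq_Msq[OF lj(1,2)] lj(3,4) by simp
  also have "\<dots> = (\<Sum>r\<in>R. \<Sum>c\<in>C. if r = a then \<alpha> r c * hadamard c b else 0)"
  proof (intro sum.cong refl)
    fix r c assume "r \<in> R" "c \<in> C"
    with R C have "r < 4" "c < 4" by auto
    with lj show "\<alpha> r c * basisB r c l j = (if r = a then \<alpha> r c * hadamard c b else 0)"
      by (simp add: basisB_eq_hadamard)
  qed
  also have "\<dots> = (\<Sum>c\<in>C. if a \<in> R then \<alpha> a c * hadamard c b else 0)"
    using fin by (subst sum.swap) simp
  also have "\<dots> = (\<Sum>c<4. coeff_mat R C \<alpha> $$ (a, c) * hadamard c b)"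
    using a C by (intro sum.mono_neutral_cong_left) (auto simp: coeff_mat_def)
  finally show ?thesis .
qed

lemma PhiA_span:
  assumes R: "R \<subseteq> {0..<4}" and C: "C \<subseteq> {0..<4}"
  shows "PhiA (\<lambda>l j. \<Sum>r\<in>R. \<Sum>c\<in>C. \<alpha> r c * basisB r c l j)
    = coeff_mat R C \<alpha> * adjoint_mat (coeff_mat R C \<alpha>)"
    (is "PhiA ?psi = ?B * adjoint_mat ?B")
proof (rule eq_matI)
  fix a a' assume "a < dim_row (?B * adjoint_mat ?B)" "a' < dim_col (?B * adjoint_mat ?B)"
  then have a: "a < 4" "a' < 4" by (simp_all add: coeff_mat_def adjoint_mat_def)
  then have "PhiA ?psi $$ (a, a') = (\<Sum>b<4. P16 ?psi a b * cnj (P16 ?psi a' b))"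
    by (simp add: PhiA_def)
  also have "\<dots> = (\<Sum>b<4. (\<Sum>c<4. ?B $$ (a, c) * hadamard c b) * cnj (\<Sum>c<4. ?B $$ (a', c) * hadamard c b))"
    using a by (intro sum.cong refl arg_cong2[where f = "(*)"] arg_cong[where f = cnj])
      (simp_all add: P16_span[OF R C])
  also have "\<dots> = (\<Sum>c<4. ?B $$ (a, c) * cnj (?B $$ (a', c)))"
    by (rule sum_mult_cnj_orthonormal_expansion) (rule hadamard_orthonormal)
  also have "\<dots> = (?B * adjoint_mat ?B) $$ (a, a')"
    using a by (simp add: coeff_mat_def adjoint_mat_def scalar_prod_def lessThan_atLeast0)
  finally show "PhiA ?psi $$ (a, a') = (?B * adjoint_mat ?B) $$ (a, a')" .
qed (simp_all add: PhiA_def coeff_mat_def adjoint_mat_def)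

lemma norm_eq_trace_PhiA:
  "(\<Sum>a<4. \<Sum>b<4. (cmod (psi a b))\<^sup>2) = Re (\<Sum>a<4. PhiA psi $$ (a, a))"
proof -
  have "(\<Sum>a<4. \<Sum>b<4. (cmod (psi a b))\<^sup>2) = (\<Sum>l<4. \<Sum>j<4. (cmod (P16 psi (Lsq l j) (Msq l j)))\<^sup>2)"
    by (simp add: P16_Lsq_Msq)
  also have "\<dots> = (\<Sum>a<4. \<Sum>b<4. (cmod (P16 psi a b))\<^sup>2)"
    by (rule sum_Lsq_Msq)
  also have "\<dots> = Re (\<Sum>a<4. PhiA psi $$ (a, a))"
    by (simp add: PhiA_def complex_mult_cnj cmod_power2)
  finally show ?thesis .
qed

lemma num_nonzero_eigs_PhiA_span_le:
  assumes R: "R \<subseteq> {0..<4}" and C: "C \<subseteq> {0..<4}"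
  shows "num_nonzero_eigs (PhiA (\<lambda>l j. \<Sum>r\<in>R. \<Sum>c\<in>C. \<alpha> r c * basisB r c l j))
    \<le> min (card R) (card C)"
proof -
  have "num_nonzero_eigs (coeff_mat R C \<alpha> * adjoint_mat (coeff_mat R C \<alpha>)) \<le> min (card C) (card R)"
    by (rule num_nonzero_eigs_mult_le[OF _ _ C R]) (auto simp: coeff_mat_def adjoint_mat_def)
  then show ?thesis by (simp add: PhiA_span[OF R C] min.commute)
qed

lemma coeff_mat_matching_gram:
  fixes f :: "nat \<Rightarrow> nat" and s :: complex
  assumes R: "R \<subseteq> {0..<4}" and C: "C \<subseteq> {0..<4}" and S: "S \<subseteq> R"
    and f: "inj_on f S" "f ` S \<subseteq> C"
  defines "\<alpha> \<equiv> \<lambda>r c. if r \<in> S \<and> c = f r then s else 0"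
  shows "coeff_mat R C \<alpha> * adjoint_mat (coeff_mat R C \<alpha>)
    = mat 4 4 (\<lambda>(a, a'). if a = a' \<and> a \<in> S then s * cnj s else 0)" (is "_ = ?D")
proof (rule eq_matI)
  fix a a' assume "a < dim_row ?D" "a' < dim_col ?D"
  then have a: "a < 4" "a' < 4" by simp_all
  have f4: "f x < 4" if "x \<in> S" for x
    using f(2) C that by (meson atLeastLessThan_iff image_subset_iff subsetD)
  have "(\<Sum>c<4. \<alpha> a c * cnj (\<alpha> a' c)) = ?D $$ (a, a')"
  proof (cases "a \<in> S")
    case True
    have "(\<Sum>c<4. \<alpha> a c * cnj (\<alpha> a' c)) = (\<Sum>c<4. if c = f a then s * cnj (\<alpha> a' (f a)) else 0)"
      by (intro sum.cong refl) (simp add: \<alpha>_def True)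
    also have "\<dots> = s * cnj (\<alpha> a' (f a))" using f4[OF True] by simp
    also have "\<dots> = ?D $$ (a, a')"
      using True a f(1) unfolding \<alpha>_def inj_on_def by auto
    finally show ?thesis .
  qed (use a in \<open>simp add: \<alpha>_def\<close>)
  moreover have "coeff_mat R C \<alpha> $$ (x, c) = \<alpha> x c" if "x < 4" "c < 4" for x c
    using that S f(2) unfolding coeff_mat_def \<alpha>_def by auto
  ultimately show "(coeff_mat R C \<alpha> * adjoint_mat (coeff_mat R C \<alpha>)) $$ (a, a') = ?D $$ (a, a')"
    using a by (simp add: adjoint_mat_def coeff_mat_def scalar_prod_def lessThan_atLeast0)
qed (simp_all add: coeff_mat_def adjoint_mat_def)

lemma PhiA_span_attains_min:
  assumes R: "R \<subseteq> {0..<4}" and C: "C \<subseteq> {0..<4}" and "R \<noteq> {}" "C \<noteq> {}"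
  obtains \<alpha> :: "nat \<Rightarrow> nat \<Rightarrow> complex"
  where "(\<Sum>a<4. \<Sum>b<4. (cmod (\<Sum>r\<in>R. \<Sum>c\<in>C. \<alpha> r c * basisB r c a b))\<^sup>2) = 1"
    and "num_nonzero_eigs (PhiA (\<lambda>a b. \<Sum>r\<in>R. \<Sum>c\<in>C. \<alpha> r c * basisB r c a b))
      = min (card R) (card C)"
proof -
  define k where "k = min (card R) (card C)"
  have fin: "finite R" "finite C" using R C finite_subset by blast+
  then have k: "k \<ge> 1" unfolding k_def using assms(3,4) by (simp add: Suc_le_eq card_gt_0_iff)
  obtain S where S: "S \<subseteq> R" "card S = k"
    using obtain_subset_with_card_n[of k R] unfolding k_def by auto
  obtain T where T: "T \<subseteq> C" "card T = k"
    using obtain_subset_with_card_n[of k C] unfolding k_def by auto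
  obtain f where f: "bij_betw f S T"
    using finite_same_card_bij[of S T] S T fin finite_subset by metis
  define s where "s = complex_of_real (1 / sqrt (real k))"
  have ss: "s * cnj s = 1 / of_nat k"
    unfolding s_def using k by (simp flip: of_real_mult)
  define \<alpha> where "\<alpha> r c = (if r \<in> S \<and> c = f r then s else 0)" for r c
  define D where "D = mat 4 4 (\<lambda>(a, a'). if a = a' \<and> a \<in> S then 1 / of_nat k else 0 :: complex)"
  have S4: "a \<in> S \<Longrightarrow> a < 4" for a using S(1) R by auto
  have PhiA: "PhiA (\<lambda>a b. \<Sum>r\<in>R. \<Sum>c\<in>C. \<alpha> r c * basisB r c a b) = D"
    using coeff_mat_matching_gram[OF R C S(1), of f s] f T(1)
    unfolding PhiA_span[OF R C] D_def \<alpha>_def ss bij_betw_def by auto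
  have "{a. a < 4 \<and> D $$ (a, a) \<noteq> 0} = S"
    using S4 k by (auto simp: D_def split: if_splits)
  then have num: "num_nonzero_eigs D = k"
    using num_nonzero_eigs_diagonal[of D 4] S(2) by (simp add: D_def diagonal_mat_def)
  have "(\<Sum>a<4. D $$ (a, a)) = (\<Sum>a\<in>S. 1 / of_nat k)"
    using S4 by (intro sum.mono_neutral_cong_right) (auto simp: D_def)
  then have norm: "Re (\<Sum>a<4. D $$ (a, a)) = 1" using S(2) k by simp
  show ?thesis
    using that[of \<alpha>] norm_eq_trace_PhiA PhiA num norm unfolding k_def by simp
qed

theorem theorem3:
  fixes R C :: "nat set"
  assumes "R \<subseteq> {0..<4}" "C \<subseteq> {0..<4}" "R \<noteq> {}" "C \<noteq> {}"
  shows "Max {num_nonzero_eigs (PhiA psi) | psi.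
            (\<exists>\<alpha> :: nat \<Rightarrow> nat \<Rightarrow> complex.
               psi = (\<lambda>a b. \<Sum>r\<in>R. \<Sum>c\<in>C. \<alpha> r c * basisB r c a b)) \<and>
            (\<Sum>a<4. \<Sum>b<4. (cmod (psi a b))\<^sup>2) = 1}
         = min (card R) (card C)" (is "Max ?N = ?k")
proof -
  have upper: "x \<le> ?k" if "x \<in> ?N" for x
    using that num_nonzero_eigs_PhiA_span_le[OF assms(1,2)] by auto
  then have "finite ?N"
    by (meson finite_atMost finite_subset atMost_iff subsetI)
  moreover obtain \<alpha> where
    "(\<Sum>a<4. \<Sum>b<4. (cmod (\<Sum>r\<in>R. \<Sum>c\<in>C. \<alpha> r c * basisB r c a b))\<^sup>2) = 1"
    "num_nonzero_eigs (PhiA (\<lambda>a b. \<Sum>r\<in>R. \<Sum>c\<in>C. \<alpha> r c * basisB r c a b)) = ?k"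
    using PhiA_span_attains_min[OF assms] .
  then have "?k \<in> ?N" by force
  ultimately show ?thesis using upper by (intro Max_eqI)
qed

end
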